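(* Fix $l\in\mathbb N$ and $A>0$, and let $G_l$ be a random variable with distribution function $$\mathbb P\{G_l\le x\}=1-e^{-e^x}\Big(1+e^x+\cdots+\frac{(e^x)^{l-1}}{(l-1)!}\Big),\quad x\in\mathbb R.$$ Then there exists a constant $C_l=C_l(A)>0$ such that $$\mathbb P\{s+u<G_l\le s+v\}\le C_l\,(v-u)\,e^{-|s|}$$ for all $u<v$ in $[-A,A]$ and all $s\in\mathbb R$. *)

theory Defs
  imports "HOL-Probability.Probability"
begin

definition G_cdf :: "nat \<Rightarrow> real \<Rightarrow> real" where
  "G_cdf l x = 1 - exp (- exp x) * (\<Sum>k<l. exp x ^ k / fact k)"

end

theory Submission
  imports Defs
begin

text \<open>
  With t = exp x, the value G_cdf l x is the probability that a Poisson variable of mean t is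
  at least l; differentiating the Poisson sum telescopes, so the density of G_l is l p_l(x),
  where p_k(x) is the Poisson mass at k. Poisson masses are at most 1, and (k+1) p_(k+1) = t p_k
  bounds the density both by t and by l (l+1) / t, i.e. by l (l+1) exp (-|x|). By the mean value
  theorem the increment over (s+u, s+v] is (v-u) times the density at a point within distance A
  of s, where exp (-|x|) is at most exp A exp (-|s|).
\<close>

definition poisson_term :: "nat \<Rightarrow> real \<Rightarrow> real" where
  "poisson_term k x = exp x ^ k / fact k * exp (- exp x)"

lemma poisson_term_eq_pmf: "poisson_term k x = pmf (poisson_pmf (exp x)) k"
  by (simp add: poisson_term_def)

lemma poisson_term_le_1: "poisson_term k x \<le> 1"
  unfolding poisson_term_eq_pmf by (rule pmf_le_1)

lemma poisson_term_Suc: "real (Suc k) * poisson_term (Suc k) x = exp x * poisson_term k x"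
  by (simp add: poisson_term_def field_simps del: of_nat_Suc)

lemma poisson_term_has_real_derivative:
  "(poisson_term k has_real_derivative
      real k * poisson_term k x - real (Suc k) * poisson_term (Suc k) x) (at x)"
proof -
  have power_deriv: "real k * exp x ^ (k - 1) * exp x = real k * exp x ^ k"
    by (cases k) simp_all
  have "(poisson_term k has_real_derivative
      (real k * exp x ^ (k - 1) * exp x * exp (- exp x) - exp x ^ k * (exp (- exp x) * exp x)) / fact k)
      (at x)"
    unfolding poisson_term_def[abs_def] by (auto intro!: derivative_eq_intros)
  also have "(real k * exp x ^ (k - 1) * exp x * exp (- exp x) - exp x ^ k * (exp (- exp x) * exp x))
      / fact k = real k * poisson_term k x - exp x * poisson_term k x"
    using power_deriv by (simp add: poisson_term_def field_simps)
  finally show ?thesis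
    by (simp only: poisson_term_Suc)
qed

lemma G_cdf_eq_poisson: "G_cdf l x = 1 - (\<Sum>k<l. poisson_term k x)"
  unfolding G_cdf_def poisson_term_def by (simp add: sum_distrib_left field_simps)

definition G_density :: "nat \<Rightarrow> real \<Rightarrow> real" where
  "G_density l x = real l * poisson_term l x"

lemma G_cdf_has_real_derivative: "(G_cdf l has_real_derivative G_density l x) (at x)"
proof -
  have "((\<lambda>x. 1 - (\<Sum>k<l. poisson_term k x)) has_real_derivative
      - (\<Sum>k<l. real k * poisson_term k x - real (Suc k) * poisson_term (Suc k) x)) (at x)"
    by (auto intro!: derivative_eq_intros poisson_term_has_real_derivative)
  moreover have "(\<Sum>k<l. real k * poisson_term k x - real (Suc k) * poisson_term (Suc k) x)
      = - (real l * poisson_term l x)"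
    using sum_lessThan_telescope'[of "\<lambda>k. real k * poisson_term k x" l] by simp
  ultimately show ?thesis
    unfolding G_cdf_eq_poisson[abs_def] G_density_def by simp
qed

lemma G_density_le: "G_density l x \<le> real l * (real l + 1) * exp (- \<bar>x\<bar>)"
proof (cases "x \<ge> 0")
  case True
  have "poisson_term l x = real (Suc l) * poisson_term (Suc l) x / exp x"
    using poisson_term_Suc[of l x] by (simp add: eq_divide_eq mult.commute del: of_nat_Suc)
  then have "G_density l x = real l * (real l + 1) * poisson_term (Suc l) x / exp x"
    by (simp add: G_density_def)
  also have "\<dots> \<le> real l * (real l + 1) / exp x"
    using poisson_term_le_1[of "Suc l" x] by (simp add: divide_right_mono mult_left_le)
  finally show ?thesis
    using True by (simp add: exp_minus divide_inverse)
next
  case False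
  show ?thesis
  proof (cases l)
    case (Suc k)
    have "G_density l x = exp x * poisson_term k x"
      using Suc poisson_term_Suc by (simp add: G_density_def)
    also have "\<dots> \<le> exp x"
      using poisson_term_le_1[of k x] by (simp add: mult_left_le)
    also have "\<dots> \<le> real l * (real l + 1) * exp (- \<bar>x\<bar>)"
      using False Suc by (simp add: mult_ge1_I)
    finally show ?thesis .
  qed (simp add: G_density_def)
qed

lemma exp_neg_abs_le_shift:
  fixes z s A :: real
  assumes "\<bar>z - s\<bar> \<le> A"
  shows "exp (- \<bar>z\<bar>) \<le> exp A * exp (- \<bar>s\<bar>)"
proof -
  have "- \<bar>z\<bar> \<le> A + - \<bar>s\<bar>"
    using assms by linarith
  then show ?thesis
    by (simp add: exp_add[symmetric])
qed

lemma increment_le_of_derivative_le_exp_neg_abs: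
  fixes f f' :: "real \<Rightarrow> real"
  assumes deriv: "\<And>x. (f has_real_derivative f' x) (at x)"
    and bound: "\<And>x. f' x \<le> K * exp (- \<bar>x\<bar>)" and "K \<ge> 0"
    and uv: "-A \<le> u" "u < v" "v \<le> A"
  shows "f (s + v) - f (s + u) \<le> K * exp A * (v - u) * exp (- \<bar>s\<bar>)"
proof -
  obtain z where z: "s + u < z" "z < s + v" and mvt: "f (s + v) - f (s + u) = (v - u) * f' z"
    using MVT2[of "s + u" "s + v" f f'] deriv uv by auto
  have "exp (- \<bar>z\<bar>) \<le> exp A * exp (- \<bar>s\<bar>)"
    using z uv by (intro exp_neg_abs_le_shift) linarith
  then have "K * exp (- \<bar>z\<bar>) \<le> K * (exp A * exp (- \<bar>s\<bar>))"
    using \<open>K \<ge> 0\<close> by (rule mult_left_mono)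
  then have "(v - u) * f' z \<le> (v - u) * (K * (exp A * exp (- \<bar>s\<bar>)))"
    using bound[of z] uv by (intro mult_left_mono) auto
  then show ?thesis
    unfolding mvt by (simp only: mult_ac)
qed

lemma (in finite_measure) measure_interval_eq_diff:
  fixes G :: "'a \<Rightarrow> real"
  assumes "G \<in> borel_measurable M" "a \<le> b"
  shows "measure M {\<omega> \<in> space M. a < G \<omega> \<and> G \<omega> \<le> b}
    = measure M {\<omega> \<in> space M. G \<omega> \<le> b} - measure M {\<omega> \<in> space M. G \<omega> \<le> a}"
proof -
  have "{\<omega> \<in> space M. a < G \<omega> \<and> G \<omega> \<le> b}
      = {\<omega> \<in> space M. G \<omega> \<le> b} - {\<omega> \<in> space M. G \<omega> \<le> a}"
    by auto
  moreover have "{\<omega> \<in> space M. G \<omega> \<le> a} \<subseteq> {\<omega> \<in> space M. G \<omega> \<le> b}"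
    using assms(2) by auto
  ultimately show ?thesis
    using assms(1) by (simp add: finite_measure_Diff)
qed

theorem lemma2p13:
  fixes M :: "'a measure" and G :: "'a \<Rightarrow> real" and l :: nat and A :: real
  assumes "prob_space M"
    and "G \<in> borel_measurable M"
    and "l \<ge> 1"
    and "A > 0"
    and "\<And>x. measure M {\<omega> \<in> space M. G \<omega> \<le> x} = G_cdf l x"
  shows "\<exists>C > 0. \<forall>s u v. -A \<le> u \<longrightarrow> u < v \<longrightarrow> v \<le> A \<longrightarrow>
           measure M {\<omega> \<in> space M. s + u < G \<omega> \<and> G \<omega> \<le> s + v}
             \<le> C * (v - u) * exp (- \<bar>s\<bar>)"
proof (intro exI[of _ "real l * (real l + 1) * exp A"] conjI allI impI)
  interpret prob_space M by fact
  show "real l * (real l + 1) * exp A > 0"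
    using assms(3) by simp
  fix s u v :: real
  assume uv: "-A \<le> u" "u < v" "v \<le> A"
  have "measure M {\<omega> \<in> space M. s + u < G \<omega> \<and> G \<omega> \<le> s + v} = G_cdf l (s + v) - G_cdf l (s + u)"
    using measure_interval_eq_diff[OF assms(2), of "s + u" "s + v"] uv assms(5) by simp
  also have "\<dots> \<le> real l * (real l + 1) * exp A * (v - u) * exp (- \<bar>s\<bar>)"
    by (rule increment_le_of_derivative_le_exp_neg_abs[OF G_cdf_has_real_derivative G_density_le _ uv])
      simp
  finally show "measure M {\<omega> \<in> space M. s + u < G \<omega> \<and> G \<omega> \<le> s + v}
      \<le> real l * (real l + 1) * exp A * (v - u) * exp (- \<bar>s\<bar>)" .
qed

end
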